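(* For every $n\ge 1$, the map $\Phi:\mathfrak{W}_n\to\mathcal{S}_n$ defined below is well defined (its output is a snake of length $n$) and is a bijection.
   Context: Let $[n]=\{1,\dots,n\}$ and let $\mathfrak{S}_n$ be the set of permutations of $[n]$, written in one-line notation $\sigma=\sigma_1\cdots\sigma_n$. A signed permutation of length $n$ is a word $p_1\cdots p_n$ with $p_i\in\{\pm1,\dots,\pm n\}$ such that $|p_1|\cdots|p_n|\in\mathfrak{S}_n$. A snake of length $n$ is a signed permutation with $p_1>0$ and $p_1>p_2<p_3>p_4<\cdots$ (strict inequalities alternating, starting with a descent). Let $\mathcal{S}_n$ denote the set of snakes of length $n$. A weakly increasing 3-dimensional permutation (3-WIP) of length $n$ is a pair $(\sigma,\pi)\in\mathfrak{S}_n^2$ with $\max(\sigma_1,\pi_1)\le\max(\sigma_2,\pi_2)\le\cdots\le\max(\sigma_n,\pi_n)$. Let $\mathfrak{W}_n$ be the set of these. For $\tau\in\mathfrak{S}_n$, a letter $k\in\{2,\dots,n\}$ is a cycle peak of $\tau$ if $\tau^{-1}(k)<k>\tau(k)$. The standard cycle form of $\tau$ writes each cycle with its largest element first and lists the cycles from left to right in increasing order of their largest elements. Foata's map $f:\mathfrak{S}_n\to\mathfrak{S}_n$ sends $\tau$ to the word obtained by erasing the parentheses of the standard cycle form of $\tau$. For a word $t=t_1\cdots t_n\in\mathfrak{S}_n$, set $t_0=0$, $t_{n+1}=+\infty$. Then $t_i$ is a left peak if $t_{i-1}<t_i>t_{i+1}$, and a right valley if $t_{i-1}>t_i<t_{i+1}$.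 Definition of $\Phi(\sigma,\pi)$ for $(\sigma,\pi)\in\mathfrak{W}_n$: (1) Let $\tau\in\mathfrak{S}_n$ be the permutation with $\tau(\sigma_i)=\pi_i$ for all $i$. Call a letter $k$ hatted if $k$ is a cycle peak of $\tau$ and there exists $\ell\in[n-1]$ with $\sigma_\ell=\pi_{\ell+1}=k$. (2) Let $\tilde\tau=f(\tau)$. The hatted letters keep their hats; they are left peaks of $\tilde\tau$. (3) Associate each right valley $\tilde\tau_i$ of $\tilde\tau$ with the left peak $\tilde\tau_j$ having the largest index $j<i$. Define $\Phi(\sigma,\pi)=p_1\cdots p_n$ by $p_i=-\tilde\tau_i$ if either (a) $i$ is even and $\tilde\tau_i$ is not a right valley, or (b) $\tilde\tau_i$ is a right valley whose associated left peak is hatted; and $p_i=\tilde\tau_i$ otherwise. Example: $(\sigma,\pi)=(152673894,\,256317849)$ gives $\tau=(5)(\hat7,1,2,6,3)(8)(\hat9,4)$, then $\tilde\tau=5\,\hat7\,1\,2\,6\,3\,8\,\hat9\,4$, and finally $\Phi(\sigma,\pi)=5\,\bar7\,\bar1\,\bar2\,6\,3\,8\,\bar9\,\bar4$, where $\bar k$ means $-k$. *)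

theory Defs
  imports Main
begin

text \<open>Permutations of [n] in one-line notation are lists (0-based list indices,
  letters 1..n). Signed permutations are int lists.\<close>

definition perm_list :: "nat \<Rightarrow> nat list \<Rightarrow> bool" where
  "perm_list n xs \<longleftrightarrow> length xs = n \<and> distinct xs \<and> set xs = {1..n}"

definition snakes :: "nat \<Rightarrow> int list set" where
  "snakes n = {ps. length ps = n
      \<and> perm_list n (map (\<lambda>p. nat \<bar>p\<bar>) ps)
      \<and> (n \<ge> 1 \<longrightarrow> ps ! 0 > 0)
      \<and> (\<forall>i. i + 1 < n \<longrightarrow> (if even i then ps ! i > ps ! (i+1) else ps ! i < ps ! (i+1)))}"

definition WIP :: "nat \<Rightarrow> (nat list \<times> nat list) set" where
  "WIP n = {(\<sigma>, \<pi>). perm_list n \<sigma> \<and> perm_list n \<pi>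
      \<and> (\<forall>i. i + 1 < n \<longrightarrow> max (\<sigma> ! i) (\<pi> ! i) \<le> max (\<sigma> ! (i+1)) (\<pi> ! (i+1)))}"

definition tau_of :: "nat list \<Rightarrow> nat list \<Rightarrow> nat \<Rightarrow> nat" where
  "tau_of \<sigma> \<pi> k = (if k \<in> set \<sigma> then \<pi> ! (LEAST i. i < length \<sigma> \<and> \<sigma> ! i = k) else k)"

definition cycle_peak :: "nat \<Rightarrow> (nat \<Rightarrow> nat) \<Rightarrow> nat \<Rightarrow> bool" where
  "cycle_peak n \<tau> k \<longleftrightarrow> 2 \<le> k \<and> k \<le> n \<and> inv_into {1..n} \<tau> k < k \<and> \<tau> k < k"

definition cycle_from :: "(nat \<Rightarrow> nat) \<Rightarrow> nat \<Rightarrow> nat list" where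
  "cycle_from \<tau> m = map (\<lambda>j. (\<tau> ^^ j) m) [0..<(LEAST j. 0 < j \<and> (\<tau> ^^ j) m = m)]"

definition cycle_maxima :: "nat \<Rightarrow> (nat \<Rightarrow> nat) \<Rightarrow> nat list" where
  "cycle_maxima n \<tau> = filter (\<lambda>m. \<forall>j. (\<tau> ^^ j) m \<le> m) [1..<n+1]"

text \<open>Foata's map: erase parentheses from the standard cycle form.\<close>
definition foata :: "nat \<Rightarrow> (nat \<Rightarrow> nat) \<Rightarrow> nat list" where
  "foata n \<tau> = concat (map (cycle_from \<tau>) (cycle_maxima n \<tau>))"

text \<open>Left peaks / right valleys of a word t (0-based position i), with t_0 = 0 and
  t_{n+1} = +infinity in the paper's 1-based convention.\<close>
definition left_peak :: "nat list \<Rightarrow> nat \<Rightarrow> bool" where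
  "left_peak t i \<longleftrightarrow> i < length t \<and> (i = 0 \<or> t ! (i-1) < t ! i)
      \<and> i + 1 < length t \<and> t ! i > t ! (i+1)"

definition right_valley :: "nat list \<Rightarrow> nat \<Rightarrow> bool" where
  "right_valley t i \<longleftrightarrow> i < length t \<and> 0 < i \<and> t ! (i-1) > t ! i
      \<and> (i + 1 = length t \<or> t ! i < t ! (i+1))"

definition hatted :: "nat list \<Rightarrow> nat list \<Rightarrow> nat \<Rightarrow> bool" where
  "hatted \<sigma> \<pi> k \<longleftrightarrow> cycle_peak (length \<sigma>) (tau_of \<sigma> \<pi>) k
      \<and> (\<exists>l. l + 1 < length \<sigma> \<and> \<sigma> ! l = k \<and> \<pi> ! (l+1) = k)"

text \<open>The map Phi. Position i here is 0-based, so "i even" in the paper is "odd i" here.\<close>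
definition Phi :: "nat list \<Rightarrow> nat list \<Rightarrow> int list" where
  "Phi \<sigma> \<pi> = (let n = length \<sigma>; t = foata n (tau_of \<sigma> \<pi>) in
     map (\<lambda>i. if (odd i \<and> \<not> right_valley t i)
                 \<or> (right_valley t i \<and> hatted \<sigma> \<pi> (t ! (GREATEST j. j < i \<and> left_peak t j)))
               then - int (t ! i) else int (t ! i)) [0..<n])"

end

theory Submission
  imports Defs "HOL-Combinatorics.Orbits" "HOL-Combinatorics.Multiset_Permutations"
begin

(* A 3-WIP (sigma, pi) lists the graph {(k, tau k)} of tau with weakly increasing maxima. The
   only freedom in this order concerns the two pairs sharing a maximum M, which for a cycle
   peak M are (M, tau M) and (tau^-1 M, M); the hat on M records that the first comes
   immediately before the second. Hence WIPs correspond to pairs of a permutation tau and a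
   set of its cycle peaks.
   Foata's map is a bijection on permutations, since its word is cut back into the cycles
   at its left-to-right maxima, and it turns the cycle peaks of tau into the left peaks of
   the word.
   In a word of distinct positive letters every left peak is followed by its own right
   valley, and the alternation of a snake forces the sign of each letter except at right
   valleys. So the snakes over a given word correspond to the sets of its left peaks, and
   Phi marks exactly the hatted ones. *)

section \<open>Peaks, valleys and signed words\<close>

definition assoc_peak :: "nat list \<Rightarrow> nat \<Rightarrow> nat" where
  "assoc_peak t i = (GREATEST j. j < i \<and> left_peak t j)"

definition signed_letter :: "nat list \<Rightarrow> (nat \<Rightarrow> bool) \<Rightarrow> nat \<Rightarrow> int" where
  "signed_letter t H i =
     (if (odd i \<and> \<not> right_valley t i) \<or> (right_valley t i \<and> H (t ! assoc_peak t i))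
      then - int (t ! i) else int (t ! i))"

definition signed_word :: "nat list \<Rightarrow> (nat \<Rightarrow> bool) \<Rightarrow> int list" where
  "signed_word t H = map (signed_letter t H) [0..<length t]"

lemma left_peak_before_descent:
  assumes t: "distinct t" and d: "d + 1 < length t" "t ! (d+1) < t ! d"
    and l: "l \<le> d" "l = 0 \<or> t ! (l-1) < t ! l"
  shows "\<exists>j. l \<le> j \<and> j \<le> d \<and> left_peak t j"
  using d l
proof (induction d)
  case 0
  then show ?case unfolding left_peak_def by auto
next
  case (Suc d)
  show ?case
  proof (cases "l = Suc d")
    case True
    then show ?thesis using Suc.prems unfolding left_peak_def by auto
  next
    case False
    show ?thesis
    proof (cases "t ! (d+1) < t ! d")
      case True
      moreover have "l \<le> d" using Suc.prems(3) False by simp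
      ultimately obtain j where "l \<le> j" "j \<le> d" "left_peak t j"
        using Suc.IH Suc.prems(1,4) by auto
      then show ?thesis by (intro exI[of _ j]) simp
    next
      case False
      have "t ! d \<noteq> t ! Suc d" using t Suc.prems(1) by (simp add: nth_eq_iff_index_eq)
      then have "t ! d < t ! Suc d" using False by simp
      then have "left_peak t (Suc d)" using Suc.prems unfolding left_peak_def by auto
      then show ?thesis using Suc.prems(3) by blast
    qed
  qed
qed

lemma right_valley_has_left_peak:
  assumes "distinct t" "right_valley t i"
  shows "\<exists>j<i. left_peak t j"
proof -
  have i: "0 < i" using assms(2) unfolding right_valley_def by simp
  have "\<exists>j. 0 \<le> j \<and> j \<le> i - 1 \<and> left_peak t j"
    using assms by (intro left_peak_before_descent) (auto simp: right_valley_def)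
  then obtain j where "j \<le> i - 1" "left_peak t j" by blast
  then show ?thesis using i by (intro exI[of _ j]) simp
qed

lemma assoc_peak:
  assumes "distinct t" "right_valley t i"
  shows "assoc_peak t i < i" "left_peak t (assoc_peak t i)"
proof -
  have "assoc_peak t i < i \<and> left_peak t (assoc_peak t i)"
    unfolding assoc_peak_def
    by (rule GreatestI_ex_nat[where b=i]) (use right_valley_has_left_peak[OF assms] in auto)
  then show "assoc_peak t i < i" "left_peak t (assoc_peak t i)" by auto
qed

lemma inj_on_assoc_peak:
  assumes t: "distinct t"
  shows "inj_on (assoc_peak t) {i. right_valley t i}"
proof -
  have ne: "assoc_peak t a \<noteq> assoc_peak t b"
    if "right_valley t a" "right_valley t b" "a < b" for a b
  proof -
    have b: "b < length t" "t ! b < t ! (b-1)" using that(2) unfolding right_valley_def by auto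
    have a: "t ! a < t ! (a+1)" using that b unfolding right_valley_def by auto
    have "a + 1 \<le> b - 1" using a b \<open>a < b\<close> by (cases "b = a + 1") auto
    then obtain j where j: "a + 1 \<le> j" "j \<le> b - 1" "left_peak t j"
      using left_peak_before_descent[OF t, of "b-1" "a+1"] a b by auto
    have "j \<le> assoc_peak t b"
      unfolding assoc_peak_def using j b by (intro Greatest_le_nat[where b=b]) auto
    then show ?thesis using assoc_peak(1)[OF t that(1)] j by simp
  qed
  show ?thesis
  proof (rule inj_onI)
    fix a b assume "a \<in> {i. right_valley t i}" "b \<in> {i. right_valley t i}"
      and "assoc_peak t a = assoc_peak t b"
    then show "a = b" using ne[of a b] ne[of b a] by (metis linorder_neq_iff mem_Collect_eq)
  qed
qed

lemma left_peak_has_right_valley: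
  assumes t: "distinct t" and lp: "left_peak t j"
  shows "\<exists>i. right_valley t i \<and> assoc_peak t i = j"
proof -
  let ?P = "\<lambda>i. j < i \<and> (i + 1 = length t \<or> t ! i < t ! (i+1))"
  have j: "j + 1 < length t" "t ! (j+1) < t ! j" using lp unfolding left_peak_def by auto
  then have "?P (length t - 1)" by auto
  define i where "i = Least ?P"
  have Pi: "?P i" and i_min: "\<And>k. ?P k \<Longrightarrow> i \<le> k"
    unfolding i_def by (fact LeastI[of ?P, OF \<open>?P (length t - 1)\<close>]) (fact Least_le)
  have i: "i < length t" using i_min[OF \<open>?P (length t - 1)\<close>] j by linarith
  have descent: "t ! (m+1) < t ! m" if "j \<le> m" "m < i" for m
  proof (cases "m = j")
    case False
    then have "\<not> ?P m" using that i_min by force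
    moreover have "t ! m \<noteq> t ! (m+1)" using t that i by (simp add: nth_eq_iff_index_eq)
    ultimately show ?thesis using that False i by auto
  qed (use j in simp)
  have rv: "right_valley t i"
    unfolding right_valley_def using Pi i descent[of "i-1"] by auto
  have "assoc_peak t i = j" unfolding assoc_peak_def
  proof (rule Greatest_equality)
    fix y assume y: "y < i \<and> left_peak t y"
    show "y \<le> j"
    proof (rule ccontr)
      assume "\<not> y \<le> j"
      then have "j \<le> y - 1" "y - 1 < i" "y - 1 + 1 = y" using y by auto
      then have "t ! y < t ! (y-1)" using descent[of "y-1"] by simp
      then show False using y \<open>\<not> y \<le> j\<close> unfolding left_peak_def by simp
    qed
  qed (use Pi lp in simp)
  then show ?thesis using rv by blast
qed

lemma signed_letter_off_valley:
  "\<not> right_valley t i \<Longrightarrow> signed_letter t H i = (if odd i then - int (t ! i) else int (t ! i))"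
  unfolding signed_letter_def by auto

lemma signed_letter_at_valley:
  "right_valley t i \<Longrightarrow>
     signed_letter t H i = (if H (t ! assoc_peak t i) then - int (t ! i) else int (t ! i))"
  unfolding signed_letter_def by auto

lemma signed_letter_cases: "signed_letter t H i = int (t ! i) \<or> signed_letter t H i = - int (t ! i)"
  unfolding signed_letter_def by auto

lemma abs_signed_word: "map (\<lambda>p. nat \<bar>p\<bar>) (signed_word t H) = t"
proof (rule nth_equalityI)
  fix i assume "i < length (map (\<lambda>p. nat \<bar>p\<bar>) (signed_word t H))"
  then show "map (\<lambda>p. nat \<bar>p\<bar>) (signed_word t H) ! i = t ! i"
    using signed_letter_cases[of t H i] by (auto simp: signed_word_def)
qed (simp add: signed_word_def)

lemma signed_word_cong:
  assumes "\<And>i. right_valley t i \<Longrightarrow> H (t ! assoc_peak t i) = H' (t ! assoc_peak t i)"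
  shows "signed_word t H = signed_word t H'"
  unfolding signed_word_def signed_letter_def using assms by auto

lemma signed_word_eqD:
  assumes "signed_word t H = signed_word t H'" "right_valley t i" "0 < t ! i"
  shows "H (t ! assoc_peak t i) = H' (t ! assoc_peak t i)"
proof -
  have "i < length t" using assms(2) unfolding right_valley_def by simp
  then have "signed_letter t H i = signed_letter t H' i"
    using arg_cong[OF assms(1), of "\<lambda>q. q ! i"] by (simp add: signed_word_def)
  then show ?thesis using assms(3)
    by (simp add: signed_letter_at_valley[OF assms(2)] split: if_splits)
qed

lemma perm_list_nth_pos: "perm_list n t \<Longrightarrow> i < length t \<Longrightarrow> 0 < t ! i"
  using nth_mem[of i t] by (fastforce simp: perm_list_def)

lemma signed_word_in_snakes:
  assumes t: "perm_list n t"
  shows "signed_word t H \<in> snakes n"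
proof -
  have len: "length t = n" using t unfolding perm_list_def by simp
  have pos: "0 < t ! j" if "j < n" for j using perm_list_nth_pos[OF t] len that by simp
  let ?s = "signed_letter t H"
  have alternating: "if even i then ?s (Suc i) < ?s i else ?s i < ?s (Suc i)"
    if i: "i + 1 < n" for i
  proof (cases "right_valley t i")
    case True
    then have "t ! i < t ! (i+1)" using i len unfolding right_valley_def by auto
    moreover from this have "\<not> right_valley t (i+1)" unfolding right_valley_def by auto
    ultimately show ?thesis
      using signed_letter_off_valley signed_letter_cases[of t H i] pos[of i] i by auto
  next
    case False
    show ?thesis
    proof (cases "right_valley t (i+1)")
      case True
      then have "t ! (i+1) < t ! i" unfolding right_valley_def by auto
      then show ?thesis
        using signed_letter_off_valley[OF False] signed_letter_cases[of t H "i+1"] by auto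
    next
      case False': False
      show ?thesis
        using signed_letter_off_valley[OF False] signed_letter_off_valley[OF False']
          pos[of i] pos[of "i+1"] i
        by auto
    qed
  qed
  have "0 < ?s 0" if "1 \<le> n"
    using signed_letter_off_valley[of t 0] pos[of 0] that by (simp add: right_valley_def)
  then show ?thesis
    using alternating abs_signed_word[of t H] len t
    by (auto simp: snakes_def signed_word_def)
qed

lemma snake_sign_off_valley:
  assumes q: "q \<in> snakes n" and t: "t = map (\<lambda>p. nat \<bar>p\<bar>) q"
    and i: "i < n" and nrv: "\<not> right_valley t i"
  shows "q ! i = (if odd i then - int (t ! i) else int (t ! i))"
proof -
  have t_perm: "perm_list n t" and q0: "1 \<le> n \<longrightarrow> 0 < q ! 0"
    and alt: "\<And>j. j + 1 < n \<Longrightarrow> (if even j then q ! (j+1) < q ! j else q ! j < q ! (j+1))"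
    using q t unfolding snakes_def by auto
  then have len: "length q = n" "length t = n" and dist: "distinct t"
    using t unfolding perm_list_def by auto
  have abs_q: "q ! j = int (t ! j) \<or> q ! j = - int (t ! j)" if "j < n" for j
    using that len t by auto
  have pos: "0 < t ! j" if "j < n" for j using perm_list_nth_pos[OF t_perm] len that by simp
  show ?thesis
  proof (cases i)
    case 0
    then show ?thesis using q0 i abs_q[of 0] by auto
  next
    case (Suc h)
    have "t ! h \<noteq> t ! i" "i + 1 < n \<Longrightarrow> t ! (i+1) \<noteq> t ! i"
      using dist len i Suc by (simp_all add: nth_eq_iff_index_eq)
    then have "t ! h < t ! i \<or> (i + 1 < n \<and> t ! (i+1) < t ! i)"
      using nrv len i Suc unfolding right_valley_def by auto
    then show ?thesis
      using alt[of h] alt[of i] abs_q[of h] abs_q[of i] abs_q[of "i+1"] pos[of h] pos[of i] i Suc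
      by (cases "even i") auto
  qed
qed

lemma snake_eq_signed_word:
  assumes q: "q \<in> snakes n"
  shows "\<exists>H. q = signed_word (map (\<lambda>p. nat \<bar>p\<bar>) q) H"
proof -
  define t where "t = map (\<lambda>p. nat \<bar>p\<bar>) q"
  have len: "length q = n" "length t = n" and dist: "distinct t"
    using q unfolding t_def snakes_def perm_list_def by auto
  define H where "H k \<longleftrightarrow> (\<exists>i. right_valley t i \<and> t ! assoc_peak t i = k \<and> q ! i < 0)" for k
  \<comment> \<open>distinct right valleys have distinct associated peaks, so \<open>H\<close> reads off the sign
    at each valley\<close>
  have H_valley: "H (t ! assoc_peak t i) \<longleftrightarrow> q ! i < 0" if rv: "right_valley t i" for i
  proof
    assume "H (t ! assoc_peak t i)"
    then obtain i' where i': "right_valley t i'" "q ! i' < 0"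
      "t ! assoc_peak t i' = t ! assoc_peak t i"
      unfolding H_def by blast
    have "assoc_peak t i' < length t" "assoc_peak t i < length t"
      using assoc_peak(1)[OF dist] i' rv unfolding right_valley_def by (meson less_trans)+
    then have "assoc_peak t i' = assoc_peak t i" using i'(3) dist by (simp add: nth_eq_iff_index_eq)
    then have "i' = i" using inj_on_assoc_peak[OF dist] i'(1) rv by (auto dest: inj_onD)
    then show "q ! i < 0" using i' by simp
  qed (use rv in \<open>auto simp: H_def\<close>)
  have "q = signed_word t H"
  proof (rule nth_equalityI)
    fix i assume "i < length q"
    then have i: "i < n" using len by simp
    show "q ! i = signed_word t H ! i"
    proof (cases "right_valley t i")
      case True
      then show ?thesis
        using H_valley[OF True] signed_letter_at_valley[OF True] i len t_def
        by (auto simp: signed_word_def)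
    qed (use snake_sign_off_valley[OF q t_def i] signed_letter_off_valley i len
        in \<open>simp add: signed_word_def\<close>)
  qed (simp add: len signed_word_def)
  then show ?thesis unfolding t_def by blast
qed


section \<open>Cycles and Foata's map\<close>

lemma cycle_from_conv_funpow_dist1:
  assumes f: "permutation f"
  shows "cycle_from f m = map (\<lambda>j. (f ^^ j) m) [0..<funpow_dist1 f m m]"
proof -
  have "(LEAST j. 0 < j \<and> (f ^^ j) m = m) = funpow_dist1 f m m"
  proof (rule Least_equality)
    show "0 < funpow_dist1 f m m \<and> (f ^^ funpow_dist1 f m m) m = m"
      using funpow_dist1_prop[OF permutation_self_in_orbit[OF f]] by simp
    fix y assume "0 < y \<and> (f ^^ y) m = m"
    then show "funpow_dist1 f m m \<le> y" using funpow_dist1_least[of y f m m] by (meson not_less)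
  qed
  then show ?thesis unfolding cycle_from_def by simp
qed

lemma length_cycle_from: "permutation f \<Longrightarrow> length (cycle_from f m) = funpow_dist1 f m m"
  by (simp add: cycle_from_conv_funpow_dist1 del: upt_Suc)

lemma nth_cycle_from:
  "permutation f \<Longrightarrow> j < length (cycle_from f m) \<Longrightarrow> cycle_from f m ! j = (f ^^ j) m"
  by (simp add: cycle_from_conv_funpow_dist1 del: upt_Suc)

lemma hd_cycle_from: "permutation f \<Longrightarrow> hd (cycle_from f m) = m"
  by (simp add: cycle_from_conv_funpow_dist1 upt_conv_Cons del: upt_Suc)

lemma cycle_from_nonempty: "permutation f \<Longrightarrow> cycle_from f m \<noteq> []"
  by (simp add: cycle_from_conv_funpow_dist1 del: upt_Suc)

lemma distinct_cycle_from:
  assumes "permutation f" shows "distinct (cycle_from f m)"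
  using assms inj_on_funpow_dist1[OF permutation_self_in_orbit[OF assms]]
  by (simp add: cycle_from_conv_funpow_dist1 distinct_map atLeast0LessThan del: upt_Suc)

lemma set_cycle_from:
  assumes "permutation f" shows "set (cycle_from f m) = orbit f m"
  using assms orbit_conv_funpow_dist1[OF permutation_self_in_orbit[OF assms]]
  by (simp add: cycle_from_conv_funpow_dist1 atLeast0LessThan del: upt_Suc)

lemma cycle_from_next:
  assumes f: "permutation f" and j: "j < length (cycle_from f m)"
  shows "f (cycle_from f m ! j) =
    (if Suc j < length (cycle_from f m) then cycle_from f m ! Suc j else m)"
proof -
  have next_j: "f (cycle_from f m ! j) = (f ^^ Suc j) m" using nth_cycle_from[OF f j] by simp
  show ?thesis
  proof (cases "Suc j < length (cycle_from f m)")
    case False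
    then have "Suc j = funpow_dist1 f m m" using j length_cycle_from[OF f] by simp
    then show ?thesis
      using next_j False funpow_dist1_prop[OF permutation_self_in_orbit[OF f]] by simp
  qed (use next_j nth_cycle_from[OF f] in simp)
qed

lemma cycle_from_eq_imp_eq_on_orbit:
  assumes f: "permutation f" and g: "permutation g"
    and eq: "cycle_from f m = cycle_from g m" and x: "x \<in> orbit f m"
  shows "f x = g x"
proof -
  obtain j where "j < length (cycle_from f m)" "x = cycle_from f m ! j"
    using x set_cycle_from[OF f] by (metis in_set_conv_nth)
  then show ?thesis using cycle_from_next[OF f] cycle_from_next[OF g] eq by metis
qed

lemma cycle_from_adjacent:
  assumes "permutation f" "cycle_from f m = us @ a # b # vs"
  shows "f a = b"
  using cycle_from_next[OF assms(1), of "length us" m] assms(2) by (simp add: nth_append)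

lemma cycle_from_last: "permutation f \<Longrightarrow> f (last (cycle_from f m)) = m"
  using cycle_from_next[of f "length (cycle_from f m) - 1" m] cycle_from_nonempty[of f m]
  by (simp add: last_conv_nth)

definition cycle_max :: "(nat \<Rightarrow> nat) \<Rightarrow> nat \<Rightarrow> bool" where
  "cycle_max f m \<longleftrightarrow> (\<forall>j. (f ^^ j) m \<le> m)"

lemma cycle_max_ge_orbit: "cycle_max f m \<Longrightarrow> y \<in> orbit f m \<Longrightarrow> y \<le> m"
  unfolding cycle_max_def orbit_altdef by auto

lemma orbit_eq_if_mem: "permutation f \<Longrightarrow> y \<in> orbit f m \<Longrightarrow> orbit f y = orbit f m"
  by (rule orbit_cyclic_eq3[OF cyclic_on_orbit'])

lemma cycle_max_exists:
  assumes f: "f permutes {1..n}" and x: "x \<in> {1..n}"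
  obtains M where "M \<in> {1..n}" "cycle_max f M" "x \<in> orbit f M"
proof -
  have perm: "permutation f" using permutes_imp_permutation[OF finite_atLeastAtMost f] .
  have sub: "orbit f x \<subseteq> {1..n}" using permutes_orbit_subset[OF f x] .
  define M where "M = Max (orbit f x)"
  have fin: "finite (orbit f x)" using sub finite_subset by blast
  have M: "M \<in> orbit f x" unfolding M_def using fin orbit_nonempty by (rule Max_in)
  have orbit_M: "orbit f M = orbit f x" by (rule orbit_eq_if_mem[OF perm M])
  have "(f ^^ j) M \<in> orbit f x" for j
    using orbit_M orbit_altdef_permutation[OF perm, of M] by auto
  then have "cycle_max f M" unfolding cycle_max_def using fin by (simp add: M_def)
  moreover have "x \<in> orbit f M" using orbit_M permutation_self_in_orbit[OF perm] by simp
  ultimately show thesis using that M sub by blast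
qed

lemma cycle_max_unique:
  assumes f: "permutation f" and "cycle_max f m" "cycle_max f m'"
    and "x \<in> orbit f m" "x \<in> orbit f m'"
  shows "m = m'"
proof -
  have "orbit f m = orbit f m'" using orbit_eq_if_mem[OF f] assms(4,5) by metis
  then have "m \<in> orbit f m'" "m' \<in> orbit f m" using permutation_self_in_orbit[OF f] by auto
  then show ?thesis using cycle_max_ge_orbit assms(2,3) by (meson antisym)
qed

lemma set_cycle_maxima: "set (cycle_maxima n f) = {m \<in> {1..n}. cycle_max f m}"
  unfolding cycle_maxima_def cycle_max_def by auto

lemma sorted_cycle_maxima: "sorted_wrt (<) (cycle_maxima n f)"
  unfolding cycle_maxima_def by (rule sorted_wrt_filter[OF sorted_wrt_upt])

lemma set_foata:
  assumes f: "f permutes {1..n}"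
  shows "set (foata n f) = {1..n}"
proof -
  have perm: "permutation f" using permutes_imp_permutation[OF finite_atLeastAtMost f] .
  have "set (foata n f) = (\<Union>m\<in>{m \<in> {1..n}. cycle_max f m}. orbit f m)"
    unfolding foata_def using set_cycle_from[OF perm] set_cycle_maxima by simp
  also have "\<dots> = {1..n}"
  proof
    show "(\<Union>m\<in>{m \<in> {1..n}. cycle_max f m}. orbit f m) \<subseteq> {1..n}"
      using permutes_orbit_subset[OF f] by blast
    show "{1..n} \<subseteq> (\<Union>m\<in>{m \<in> {1..n}. cycle_max f m}. orbit f m)"
    proof
      fix x assume "x \<in> {1..n}"
      then obtain M where "M \<in> {1..n}" "cycle_max f M" "x \<in> orbit f M"
        by (rule cycle_max_exists[OF f])
      then show "x \<in> (\<Union>m\<in>{m \<in> {1..n}. cycle_max f m}. orbit f m)" by blast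
    qed
  qed
  finally show ?thesis .
qed

lemma distinct_foata:
  assumes f: "f permutes {1..n}"
  shows "distinct (foata n f)"
  unfolding foata_def
proof (rule distinct_concat)
  have perm: "permutation f" using permutes_imp_permutation[OF finite_atLeastAtMost f] .
  have "inj_on (cycle_from f) (set (cycle_maxima n f))"
    by (rule inj_onI) (metis hd_cycle_from[OF perm])
  then show "distinct (map (cycle_from f) (cycle_maxima n f))"
    using sorted_cycle_maxima strict_sorted_iff by (auto simp: distinct_map)
  show "\<And>ys. ys \<in> set (map (cycle_from f) (cycle_maxima n f)) \<Longrightarrow> distinct ys"
    using distinct_cycle_from[OF perm] by auto
  show "set ys \<inter> set zs = {}"
    if "ys \<in> set (map (cycle_from f) (cycle_maxima n f))"
      "zs \<in> set (map (cycle_from f) (cycle_maxima n f))" "ys \<noteq> zs" for ys zs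
    using that cycle_max_unique[OF perm]
    by (fastforce simp: set_cycle_from[OF perm] set_cycle_maxima)
qed

lemma perm_list_foata:
  assumes "f permutes {1..n}" shows "perm_list n (foata n f)"
proof -
  have "length (foata n f) = n"
    using distinct_card[OF distinct_foata[OF assms]] set_foata[OF assms] by simp
  then show ?thesis unfolding perm_list_def using set_foata[OF assms] distinct_foata[OF assms]
    by simp
qed

definition leader_blocks :: "nat list list \<Rightarrow> bool" where
  "leader_blocks bs \<longleftrightarrow>
     (\<forall>b\<in>set bs. b \<noteq> [] \<and> (\<forall>y\<in>set (tl b). y < hd b)) \<and> sorted_wrt (<) (map hd bs)"

lemma leader_blocks_concat_inj:
  "leader_blocks bs \<Longrightarrow> leader_blocks cs \<Longrightarrow> concat bs = concat cs \<Longrightarrow> bs = cs"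
proof (induction bs arbitrary: cs)
  case Nil
  then show ?case unfolding leader_blocks_def by (cases cs) auto
next
  case (Cons b bs)
  from Cons.prems obtain c cs' where cs: "cs = c # cs'"
    unfolding leader_blocks_def by (cases cs) auto
  have first_block:
    "d = hd (concat (d # ds)) # takeWhile (\<lambda>y. y < hd (concat (d # ds))) (tl (concat (d # ds)))"
    if "leader_blocks (d # ds)" for d ds
  proof -
    have d: "d \<noteq> []" "\<forall>y\<in>set (tl d). y < hd d" and heads: "sorted_wrt (<) (map hd (d # ds))"
      using that unfolding leader_blocks_def by auto
    have "takeWhile (\<lambda>y. y < hd d) (concat ds) = []"
    proof (cases ds)
      case (Cons e es)
      then have "e \<noteq> []" using that unfolding leader_blocks_def by simp
      then show ?thesis using heads Cons by (simp add: takeWhile_eq_Nil_iff)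
    qed simp
    then show ?thesis using d by simp
  qed
  have bc: "b = c" using first_block[OF Cons.prems(1)] first_block[of c cs'] Cons.prems(2,3) cs
    by simp
  have "leader_blocks bs" using Cons.prems(1) by (simp add: leader_blocks_def)
  moreover have "leader_blocks cs'" using Cons.prems(2) unfolding cs
    by (simp add: leader_blocks_def)
  moreover have "concat bs = concat cs'" using Cons.prems(3) cs bc by simp
  ultimately show ?case using Cons.IH cs bc by blast
qed

lemma leader_blocks_foata:
  assumes perm: "permutation f"
  shows "leader_blocks (map (cycle_from f) (cycle_maxima n f))"
proof -
  have "y < m" if "cycle_max f m" "y \<in> set (tl (cycle_from f m))" for m y
  proof -
    have "y \<noteq> m" using that(2) distinct_cycle_from[OF perm, of m] hd_cycle_from[OF perm, of m]
      by (metis cycle_from_nonempty[OF perm] distinct.simps(2) list.collapse)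
    moreover have "y \<le> m"
      using that set_cycle_from[OF perm, of m] cycle_max_ge_orbit
        list.set_sel(2)[of "cycle_from f m" y]
      by (metis tl_Nil empty_iff list.set(1))
    ultimately show ?thesis by simp
  qed
  moreover have "map hd (map (cycle_from f) (cycle_maxima n f)) = cycle_maxima n f"
    using hd_cycle_from[OF perm] by (simp add: map_idI)
  ultimately show ?thesis
    unfolding leader_blocks_def using cycle_from_nonempty[OF perm] hd_cycle_from[OF perm]
      sorted_cycle_maxima set_cycle_maxima by auto
qed

lemma foata_inj:
  assumes f: "f permutes {1..n}" and g: "g permutes {1..n}" and eq: "foata n f = foata n g"
  shows "f = g"
proof
  fix x
  have pf: "permutation f" and pg: "permutation g"
    using permutes_imp_permutation finite_atLeastAtMost f g by blast+
  have blocks: "map (cycle_from f) (cycle_maxima n f) = map (cycle_from g) (cycle_maxima n g)"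
    using leader_blocks_concat_inj[OF leader_blocks_foata[OF pf] leader_blocks_foata[OF pg]] eq
    unfolding foata_def by blast
  then have "map hd (map (cycle_from f) (cycle_maxima n f)) =
      map hd (map (cycle_from g) (cycle_maxima n g))"
    by simp
  then have maxima: "cycle_maxima n f = cycle_maxima n g"
    using hd_cycle_from[OF pf] hd_cycle_from[OF pg] by (simp add: map_idI)
  show "f x = g x"
  proof (cases "x \<in> {1..n}")
    case True
    then obtain M where M: "M \<in> {1..n}" "cycle_max f M" "x \<in> orbit f M"
      using cycle_max_exists[OF f] by blast
    then have "M \<in> set (cycle_maxima n f)" unfolding set_cycle_maxima by simp
    then have "cycle_from f M = cycle_from g M" using blocks maxima by (simp add: map_eq_conv)
    then show ?thesis using cycle_from_eq_imp_eq_on_orbit[OF pf pg _ M(3)] by simp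
  qed (simp add: permutes_not_in[OF f] permutes_not_in[OF g])
qed

lemma perm_list_eq_permutations_of_set: "{t. perm_list n t} = permutations_of_set {1..n}"
  unfolding perm_list_def permutations_of_set_def using distinct_card by fastforce

lemma bij_betw_foata: "bij_betw (foata n) {f. f permutes {1..n}} {t. perm_list n t}"
proof -
  have inj: "inj_on (foata n) {f. f permutes {1..n}}"
    using foata_inj by (auto intro: inj_onI)
  moreover have "foata n ` {f. f permutes {1..n}} \<subseteq> {t. perm_list n t}"
    using perm_list_foata by blast
  moreover have "card (foata n ` {f. f permutes {1..n}}) = card {t. perm_list n t}"
    using card_image[OF inj] card_permutations[of "{1..n}" n]
    by (simp add: perm_list_eq_permutations_of_set)
  ultimately show ?thesis
    unfolding bij_betw_def perm_list_eq_permutations_of_set by (simp add: card_subset_eq)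
qed

lemma concat_adjacent_cases:
  assumes "\<forall>b\<in>set bs. b \<noteq> []" and "concat bs = xs @ a # c # ys"
  shows "(\<exists>b\<in>set bs. \<exists>us vs. b = us @ a # c # vs) \<or>
         (\<exists>us b1 b2 vs. bs = us @ b1 # b2 # vs \<and> a = last b1 \<and> c = hd b2)"
  using assms
proof (induction bs arbitrary: xs)
  case (Cons b bs)
  then have b: "b \<noteq> []" and eq: "b @ concat bs = xs @ a # c # ys" by auto
  consider (inside) "length xs + 1 < length b" | (boundary) "length xs + 1 = length b"
    | (later) "length b \<le> length xs" by linarith
  then show ?case
  proof cases
    case inside
    then have "take (length xs) b = xs" "drop (length xs) b @ concat bs = a # c # ys"
      using eq by (auto simp: append_eq_append_conv_if)
    moreover obtain u v w where "drop (length xs) b = u # v # w"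
      using inside by (cases "drop (length xs) b" rule: remdups_adj.cases)
        (auto dest: arg_cong[where f=length])
    ultimately have "b = xs @ a # c # w" by (metis append_Cons append_take_drop_id list.inject)
    then show ?thesis by auto
  next
    case boundary
    then have "take (length xs) b = xs" "drop (length xs) b @ concat bs = a # c # ys"
      using eq by (auto simp: append_eq_append_conv_if)
    moreover obtain u where "drop (length xs) b = [u]"
      using boundary by (cases "drop (length xs) b" rule: remdups_adj.cases)
        (auto dest: arg_cong[where f=length])
    ultimately have "b = xs @ [a]" and rest: "concat bs = c # ys"
      by (metis append_Cons append_Nil append_take_drop_id list.inject)+
    obtain b2 bs' where bs: "bs = b2 # bs'" using rest by (cases bs) auto
    then have "c = hd b2" using rest Cons.prems(1) by (cases b2) auto
    then show ?thesis using bs \<open>b = xs @ [a]\<close> by (metis append_Nil last_snoc)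
  next
    case later
    then have "concat bs = drop (length b) xs @ a # c # ys"
      using eq by (auto simp: append_eq_append_conv_if)
    then have "(\<exists>b\<in>set bs. \<exists>us vs. b = us @ a # c # vs) \<or>
         (\<exists>us b1 b2 vs. bs = us @ b1 # b2 # vs \<and> a = last b1 \<and> c = hd b2)"
      using Cons.IH Cons.prems(1) by simp
    then show ?thesis by (metis Cons_eq_appendI list.set_intros(2))
  qed
qed simp

lemma foata_adjacent:
  assumes f: "f permutes {1..n}" and j: "j + 1 < n"
  shows "foata n f ! (j+1) = f (foata n f ! j) \<or>
    (foata n f ! j \<le> f (foata n f ! j) \<and> foata n f ! j < foata n f ! (j+1) \<and>
     cycle_max f (foata n f ! (j+1)))"
proof -
  have perm: "permutation f" using permutes_imp_permutation[OF finite_atLeastAtMost f] .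
  let ?F = "foata n f" and ?bs = "map (cycle_from f) (cycle_maxima n f)"
  have "length ?F = n" using perm_list_foata[OF f] unfolding perm_list_def by simp
  then have "?F = take j ?F @ ?F ! j # ?F ! (j+1) # drop (j+2) ?F"
    using j by (simp add: Cons_nth_drop_Suc)
  then have split: "concat ?bs = take j ?F @ ?F ! j # ?F ! (j+1) # drop (j+2) ?F"
    by (simp only: foata_def[symmetric])
  have nonempty: "\<forall>b\<in>set ?bs. b \<noteq> []" using cycle_from_nonempty[OF perm] by simp
  from concat_adjacent_cases[OF nonempty split] show ?thesis
  proof (elim disjE bexE exE conjE)
    fix b us vs assume "b \<in> set ?bs" "b = us @ ?F ! j # ?F ! (j+1) # vs"
    then obtain m where "cycle_from f m = us @ ?F ! j # ?F ! (j+1) # vs" by auto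
    then have "f (?F ! j) = ?F ! (j+1)" by (rule cycle_from_adjacent[OF perm])
    then show ?thesis by simp
  next
    fix us b1 b2 vs assume bs: "?bs = us @ b1 # b2 # vs" and last: "?F ! j = last b1"
      and hd: "?F ! (j+1) = hd b2"
    then obtain us' m1 m2 vs' where ms: "cycle_maxima n f = us' @ m1 # m2 # vs'"
      and b1: "b1 = cycle_from f m1" and b2: "b2 = cycle_from f m2"
      by (auto simp: map_eq_append_conv)
    have "cycle_max f m1" "cycle_max f m2" using ms set_cycle_maxima[of n f] by auto
    moreover have "m1 < m2" using sorted_cycle_maxima[of n f] ms by (simp add: sorted_wrt_append)
    moreover have "?F ! j \<le> m1"
      using cycle_max_ge_orbit[OF \<open>cycle_max f m1\<close>] last b1 set_cycle_from[OF perm]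
        last_in_set[OF cycle_from_nonempty[OF perm]] by metis
    ultimately show ?thesis
      using last hd b1 b2 cycle_from_last[OF perm] hd_cycle_from[OF perm] by auto
  qed
qed

lemma foata_first:
  assumes f: "f permutes {1..n}" and n: "1 \<le> n"
  shows "cycle_max f (foata n f ! 0)"
proof -
  have perm: "permutation f" using permutes_imp_permutation[OF finite_atLeastAtMost f] .
  have "foata n f \<noteq> []" using perm_list_foata[OF f] n unfolding perm_list_def by auto
  then obtain m ms where ms: "cycle_maxima n f = m # ms" unfolding foata_def
    by (cases "cycle_maxima n f") auto
  then have "foata n f ! 0 = m"
    using cycle_from_nonempty[OF perm, of m] hd_cycle_from[OF perm, of m]
    by (simp add: foata_def nth_append hd_conv_nth)
  then show ?thesis using ms set_cycle_maxima[of n f]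
    by (metis (mono_tags) list.set_intros(1) mem_Collect_eq)
qed

lemma foata_last:
  assumes f: "f permutes {1..n}" and n: "1 \<le> n"
  shows "foata n f ! (n-1) \<le> f (foata n f ! (n-1))"
proof -
  have perm: "permutation f" using permutes_imp_permutation[OF finite_atLeastAtMost f] .
  have len: "length (foata n f) = n" using perm_list_foata[OF f] unfolding perm_list_def by simp
  then obtain ms m where ms: "cycle_maxima n f = ms @ [m]"
    using n unfolding foata_def
    by (metis concat.simps(1) list.size(3) list.simps(8) not_one_le_zero rev_exhaust)
  then have "last (foata n f) = last (cycle_from f m)"
    using cycle_from_nonempty[OF perm, of m] by (simp add: foata_def)
  moreover have "last (foata n f) = foata n f ! (n-1)"
    using len n last_conv_nth[of "foata n f"] by fastforce
  ultimately have "foata n f ! (n-1) = last (cycle_from f m)" by simp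
  moreover have "cycle_max f m" using ms set_cycle_maxima[of n f] by auto
  ultimately show ?thesis
    using cycle_max_ge_orbit set_cycle_from[OF perm] last_in_set[OF cycle_from_nonempty[OF perm]]
      cycle_from_last[OF perm] by metis
qed

lemma foata_descent_iff:
  assumes f: "f permutes {1..n}" and i: "i < n"
  shows "i + 1 < n \<and> foata n f ! (i+1) < foata n f ! i \<longleftrightarrow> f (foata n f ! i) < foata n f ! i"
proof (cases "i + 1 < n")
  case True
  then show ?thesis using foata_adjacent[OF f True] by auto
next
  case False
  then have "i = n - 1" using i by simp
  then show ?thesis using foata_last[OF f] i False by fastforce
qed

lemma foata_ascent_iff:
  assumes f: "f permutes {1..n}" and i: "i < n" and descent: "f (foata n f ! i) < foata n f ! i"
  shows "i = 0 \<or> foata n f ! (i-1) < foata n f ! i \<longleftrightarrow>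
    inv_into {1..n} f (foata n f ! i) < foata n f ! i"
proof -
  have perm: "permutation f" using permutes_imp_permutation[OF finite_atLeastAtMost f] .
  define x where "x = foata n f ! i"
  define p where "p = inv_into {1..n} f x"
  have "x \<in> {1..n}" using perm_list_foata[OF f] i unfolding perm_list_def x_def by (metis nth_mem)
  then have "x \<in> f ` {1..n}" using permutes_image[OF f] by simp
  then have fp: "f p = x" unfolding p_def by (rule f_inv_into_f)
  have p_less: "p < x" if "cycle_max f x"
  proof -
    have "x \<in> orbit f p" using fp orbit.base by metis
    then have "p \<in> orbit f x" using orbit_eq_if_mem[OF perm] permutation_self_in_orbit[OF perm]
      by metis
    then have "p \<le> x" using cycle_max_ge_orbit that by blast
    moreover have "p \<noteq> x" using fp descent x_def by auto
    ultimately show ?thesis by simp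
  qed
  show ?thesis
  proof (cases i)
    case 0
    then show ?thesis using p_less foata_first[OF f] i unfolding x_def p_def by simp
  next
    case (Suc h)
    then have "foata n f ! Suc h = f (foata n f ! h) \<or>
        (foata n f ! h < foata n f ! Suc h \<and> cycle_max f x)"
      using foata_adjacent[OF f, of h] i x_def by auto
    moreover have "f (foata n f ! h) = x \<Longrightarrow> p = foata n f ! h"
      using fp permutes_inj[OF f] by (auto dest: injD)
    ultimately show ?thesis using p_less Suc unfolding x_def p_def by auto
  qed
qed

lemma left_peak_foata_iff:
  assumes f: "f permutes {1..n}" and i: "i < n"
  shows "left_peak (foata n f) i \<longleftrightarrow> cycle_peak n f (foata n f ! i)"
proof -
  let ?x = "foata n f ! i"
  have len: "length (foata n f) = n" and set: "set (foata n f) = {1..n}"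
    using perm_list_foata[OF f] unfolding perm_list_def by auto
  have x: "?x \<in> {1..n}" using nth_mem[of i "foata n f"] len set i by simp
  have "f ?x \<in> {1..n}" using permutes_in_image[OF f] x by blast
  then have "cycle_peak n f ?x \<longleftrightarrow> inv_into {1..n} f ?x < ?x \<and> f ?x < ?x"
    unfolding cycle_peak_def using x by auto
  moreover have "left_peak (foata n f) i \<longleftrightarrow>
      (i = 0 \<or> foata n f ! (i-1) < ?x) \<and> (i + 1 < n \<and> foata n f ! (i+1) < ?x)"
    unfolding left_peak_def len using i by blast
  ultimately show ?thesis
    using foata_ascent_iff[OF f i] foata_descent_iff[OF f i] by (cases "f ?x < ?x") simp_all
qed


section \<open>Weakly increasing 3-dimensional permutations\<close>

lemma tau_of_nth:
  assumes "distinct \<sigma>" "i < length \<sigma>"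
  shows "tau_of \<sigma> \<pi> (\<sigma> ! i) = \<pi> ! i"
proof -
  have "(LEAST j. j < length \<sigma> \<and> \<sigma> ! j = \<sigma> ! i) = i"
    using assms by (intro Least_equality) (auto simp: nth_eq_iff_index_eq)
  then show ?thesis using assms(2) unfolding tau_of_def by simp
qed

lemma tau_of_permutes:
  assumes \<sigma>: "perm_list n \<sigma>" and \<pi>: "perm_list n \<pi>"
  shows "tau_of \<sigma> \<pi> permutes {1..n}"
proof (rule bij_imp_permutes)
  have len: "length \<sigma> = n" "length \<pi> = n" and dist: "distinct \<sigma>"
    and set: "set \<sigma> = {1..n}" "set \<pi> = {1..n}"
    using \<sigma> \<pi> unfolding perm_list_def by auto
  have "tau_of \<sigma> \<pi> ` {1..n} = tau_of \<sigma> \<pi> ` set \<sigma>" using set by simp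
  also have "\<dots> = set \<pi>"
  proof
    show "tau_of \<sigma> \<pi> ` set \<sigma> \<subseteq> set \<pi>"
      using tau_of_nth[OF dist] len by (fastforce simp: in_set_conv_nth)
    show "set \<pi> \<subseteq> tau_of \<sigma> \<pi> ` set \<sigma>"
    proof
      fix y assume "y \<in> set \<pi>"
      then obtain i where "i < n" "y = \<pi> ! i" using len by (auto simp: in_set_conv_nth)
      then have "y = tau_of \<sigma> \<pi> (\<sigma> ! i)" "\<sigma> ! i \<in> set \<sigma>" using tau_of_nth[OF dist, of i \<pi>] len
        by auto
      then show "y \<in> tau_of \<sigma> \<pi> ` set \<sigma>" by blast
    qed
  qed
  finally have image: "tau_of \<sigma> \<pi> ` {1..n} = {1..n}" using set by simp
  then have "inj_on (tau_of \<sigma> \<pi>) {1..n}" by (intro eq_card_imp_inj_on) auto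
  then show "bij_betw (tau_of \<sigma> \<pi>) {1..n} {1..n}" using image by (simp add: bij_betw_def)
  show "tau_of \<sigma> \<pi> x = x" if "x \<notin> {1..n}" for x
    using that set unfolding tau_of_def by auto
qed

lemma set_zip_eq_graph:
  assumes \<sigma>: "perm_list n \<sigma>" and \<pi>: "length \<pi> = n"
  shows "set (zip \<sigma> \<pi>) = (\<lambda>k. (k, tau_of \<sigma> \<pi> k)) ` {1..n}"
proof -
  have len: "length \<sigma> = n" and dist: "distinct \<sigma>" and set: "set \<sigma> = {1..n}"
    using \<sigma> unfolding perm_list_def by auto
  have "set (zip \<sigma> \<pi>) = {(\<sigma> ! i, \<pi> ! i) | i. i < n}"
    using len \<pi> by (simp add: set_zip)
  also have "\<dots> = {(\<sigma> ! i, tau_of \<sigma> \<pi> (\<sigma> ! i)) | i. i < n}"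
    using tau_of_nth[OF dist] len by auto
  also have "\<dots> = (\<lambda>k. (k, tau_of \<sigma> \<pi> k)) ` set \<sigma>"
    by (auto simp: set_conv_nth len)
  finally show ?thesis using set by simp
qed

text \<open>For a cycle peak \<open>M\<close> of \<open>\<tau>\<close> the two pairs of the graph with maximum \<open>M\<close> are
  \<open>(M, \<tau> M)\<close> and \<open>(\<tau>\<^sup>-\<^sup>1 M, M)\<close>; the key puts the first one directly before the second iff
  \<open>H M\<close>. Every other maximum is carried by a single pair.\<close>

definition wip_key :: "(nat \<Rightarrow> bool) \<Rightarrow> nat \<times> nat \<Rightarrow> nat" where
  "wip_key H p = 2 * max (fst p) (snd p) +
     (if snd p < fst p then (if H (fst p) then 0 else 1) else (if H (snd p) then 1 else 0))"

lemma wip_key_bounds: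
  "2 * max (fst p) (snd p) \<le> wip_key H p" "wip_key H p \<le> 2 * max (fst p) (snd p) + 1"
  unfolding wip_key_def by auto

lemma wip_key_fst_max: "snd p < fst p \<Longrightarrow> wip_key H p = 2 * fst p + (if H (fst p) then 0 else 1)"
  unfolding wip_key_def by simp

lemma wip_key_snd_max: "fst p < snd p \<Longrightarrow> wip_key H p = 2 * snd p + (if H (snd p) then 1 else 0)"
  unfolding wip_key_def by simp

lemma max_le_if_wip_key_le:
  "wip_key H p \<le> wip_key H q \<Longrightarrow> max (fst p) (snd p) \<le> max (fst q) (snd q)"
  using wip_key_bounds[where H=H and p=p] wip_key_bounds[where H=H and p=q] by linarith

lemma inj_on_wip_key:
  assumes f: "f permutes S"
  shows "inj_on (wip_key H) ((\<lambda>k. (k, f k)) ` S)"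
proof (rule inj_onI)
  fix p q assume "p \<in> (\<lambda>k. (k, f k)) ` S" "q \<in> (\<lambda>k. (k, f k)) ` S"
    and eq': "wip_key H p = wip_key H q"
  then obtain a c where p: "p = (a, f a)" and q: "q = (c, f c)" by blast
  note eq = eq'[unfolded p q]
  define M where "M = max a (f a)"
  have M: "max c (f c) = M"
    using eq wip_key_bounds[where H=H and p="(a, f a)"] wip_key_bounds[where H=H and p="(c, f c)"]
    unfolding M_def by simp
  show "p = q"
  proof (rule ccontr)
    assume "p \<noteq> q"
    then have "a \<noteq> c" using p q by auto
    moreover from this have "f a \<noteq> f c" using permutes_inj[OF f] by (auto dest: injD)
    ultimately have "(a = M \<and> f c = M \<and> f a < M \<and> c < M) \<or> (f a = M \<and> c = M \<and> a < M \<and> f c < M)"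
      using M unfolding M_def by (auto simp: max_def split: if_splits)
    then show False
      using eq wip_key_fst_max[where H=H and p="(a, f a)"]
        wip_key_snd_max[where H=H and p="(c, f c)"]
        wip_key_snd_max[where H=H and p="(a, f a)"] wip_key_fst_max[where H=H and p="(c, f c)"]
      by (auto split: if_splits)
  qed
qed

lemma sorted_key_unique:
  assumes "inj_on g (set xs)" "distinct xs" "distinct ys" "set xs = set ys"
    and "sorted (map g xs)" "sorted (map g ys)"
  shows "xs = ys"
proof -
  have "distinct (map g xs)" "distinct (map g ys)" using assms(1-4) by (auto simp: distinct_map)
  then have "map g xs = map g ys" using assms(4-6) sorted_distinct_set_unique by (metis set_map)
  then show ?thesis using assms(1,4) by (simp add: inj_on_map_eq_map)
qed

lemma hatted_if_graph_pairs_adjacent: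
  assumes \<sigma>: "perm_list n \<sigma>" and \<pi>: "perm_list n \<pi>" and i: "i + 1 < n"
    and M: "\<sigma> ! i = M" "\<pi> ! (i+1) = M" "\<pi> ! i < M" "\<sigma> ! (i+1) < M"
  shows "hatted \<sigma> \<pi> M"
proof -
  let ?t = "tau_of \<sigma> \<pi>"
  have len: "length \<sigma> = n" "length \<pi> = n" and dist: "distinct \<sigma>"
    and set: "set \<sigma> = {1..n}" "set \<pi> = {1..n}"
    using \<sigma> \<pi> unfolding perm_list_def by auto
  have in_set: "\<sigma> ! (i+1) \<in> {1..n}" "M \<in> {1..n}" using set len i M(2) by (metis nth_mem)+
  have t: "?t M = \<pi> ! i" "?t (\<sigma> ! (i+1)) = M" using tau_of_nth[OF dist] len i M by auto
  have "inv_into {1..n} ?t M = \<sigma> ! (i+1)"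
    using inv_into_f_eq[OF permutes_inj_on[OF tau_of_permutes[OF \<sigma> \<pi>]] in_set(1)] t by simp
  then have "cycle_peak n ?t M" unfolding cycle_peak_def using M t in_set by auto
  then show ?thesis unfolding hatted_def using M i len by auto
qed

lemma not_hatted_if_graph_pairs_reversed:
  assumes "distinct \<sigma>" "distinct \<pi>" "length \<sigma> = n" "length \<pi> = n" "i + 1 < n"
    and "\<pi> ! i = M" "\<sigma> ! (i+1) = M"
  shows "\<not> hatted \<sigma> \<pi> M"
proof
  assume "hatted \<sigma> \<pi> M"
  then obtain l where l: "l + 1 < n" "\<sigma> ! l = M" "\<pi> ! (l+1) = M"
    unfolding hatted_def using assms(3) by blast
  \<comment> \<open>the hat would need \<open>\<pi>\<^sub>i\<^sub>+\<^sub>2 = M = \<pi>\<^sub>i\<close>\<close>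
  then have "\<sigma> ! l = \<sigma> ! (i+1)" using assms(7) by simp
  then have "l = i + 1" using l assms(1,3,5) by (simp add: nth_eq_iff_index_eq)
  then have "\<pi> ! (i+2) = \<pi> ! i" using l assms(6) by simp
  then show False using l \<open>l = i + 1\<close> assms(2,4) by (simp add: nth_eq_iff_index_eq)
qed

lemma wip_key_adjacent_le:
  assumes w: "(\<sigma>, \<pi>) \<in> WIP n" and i: "i + 1 < n"
  shows "wip_key (hatted \<sigma> \<pi>) (\<sigma> ! i, \<pi> ! i) \<le> wip_key (hatted \<sigma> \<pi>) (\<sigma> ! (i+1), \<pi> ! (i+1))"
proof -
  have \<sigma>: "perm_list n \<sigma>" and \<pi>: "perm_list n \<pi>"
    and mono: "max (\<sigma> ! i) (\<pi> ! i) \<le> max (\<sigma> ! (i+1)) (\<pi> ! (i+1))"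
    using w i unfolding WIP_def by auto
  have len: "length \<sigma> = n" "length \<pi> = n" and dist: "distinct \<sigma>" "distinct \<pi>"
    using \<sigma> \<pi> unfolding perm_list_def by auto
  let ?H = "hatted \<sigma> \<pi>"
  define a b a' b' where "a = \<sigma> ! i" "b = \<pi> ! i" "a' = \<sigma> ! (i+1)" "b' = \<pi> ! (i+1)"
  have "a \<noteq> a'" "b \<noteq> b'" using dist len i unfolding a_b_a'_b'_def
    by (simp_all add: nth_eq_iff_index_eq)
  show ?thesis
  proof (cases "max a b < max a' b'")
    case True
    have "wip_key ?H (a, b) \<le> 2 * max a b + 1" "2 * max a' b' \<le> wip_key ?H (a', b')"
      using wip_key_bounds[where H="?H" and p="(a, b)"]
        wip_key_bounds[where H="?H" and p="(a', b')"]
      by simp_all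
    then show ?thesis using True unfolding a_b_a'_b'_def by linarith
  next
    case False
    define M where "M = max a b"
    have "max a' b' = M" using False mono unfolding M_def a_b_a'_b'_def by linarith
    then consider "a = M" "b' = M" "b < M" "a' < M" | "b = M" "a' = M" "a < M" "b' < M"
      using \<open>a \<noteq> a'\<close> \<open>b \<noteq> b'\<close> unfolding M_def by (auto simp: max_def split: if_splits)
    then show ?thesis
    proof cases
      case 1
      then have "?H M" using hatted_if_graph_pairs_adjacent[OF \<sigma> \<pi> i] unfolding a_b_a'_b'_def by simp
      then show ?thesis
        using wip_key_fst_max[where H="?H" and p="(a, b)"]
          wip_key_snd_max[where H="?H" and p="(a', b')"] 1
        unfolding a_b_a'_b'_def by simp
    next
      case 2
      then have "\<not> ?H M"
        using not_hatted_if_graph_pairs_reversed[OF dist len i] unfolding a_b_a'_b'_def by simp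
      then show ?thesis
        using wip_key_snd_max[where H="?H" and p="(a, b)"]
          wip_key_fst_max[where H="?H" and p="(a', b')"] 2
        unfolding a_b_a'_b'_def by simp
    qed
  qed
qed

lemma sorted_wip_key:
  assumes "(\<sigma>, \<pi>) \<in> WIP n"
  shows "sorted (map (wip_key (hatted \<sigma> \<pi>)) (zip \<sigma> \<pi>))"
proof -
  have "length \<sigma> = n" "length \<pi> = n" using assms unfolding WIP_def perm_list_def by auto
  then show ?thesis using wip_key_adjacent_le[OF assms] by (auto simp: sorted_iff_nth_Suc)
qed

lemma WIP_eq_if_same_tau_hatted:
  assumes w: "(\<sigma>, \<pi>) \<in> WIP n" and w': "(\<sigma>', \<pi>') \<in> WIP n"
    and tau: "tau_of \<sigma> \<pi> = tau_of \<sigma>' \<pi>'" and hat: "hatted \<sigma> \<pi> = hatted \<sigma>' \<pi>'"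
  shows "(\<sigma>, \<pi>) = (\<sigma>', \<pi>')"
proof -
  have \<sigma>: "perm_list n \<sigma>" "perm_list n \<sigma>'" and \<pi>: "perm_list n \<pi>" "perm_list n \<pi>'"
    using w w' unfolding WIP_def by auto
  then have len: "length \<pi> = n" "length \<pi>' = n" "length \<sigma> = n" "length \<sigma>' = n"
    and "distinct \<sigma>" "distinct \<sigma>'" unfolding perm_list_def by auto
  \<comment> \<open>both WIPs list the graph of \<open>\<tau>\<close> sorted by the same injective key\<close>
  have "zip \<sigma> \<pi> = zip \<sigma>' \<pi>'"
  proof (rule sorted_key_unique)
    show "inj_on (wip_key (hatted \<sigma> \<pi>)) (set (zip \<sigma> \<pi>))"
      unfolding set_zip_eq_graph[OF \<sigma>(1) len(1)]
      by (rule inj_on_wip_key[OF tau_of_permutes[OF \<sigma>(1) \<pi>(1)]])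
    show "distinct (zip \<sigma> \<pi>)" "distinct (zip \<sigma>' \<pi>')"
      using \<open>distinct \<sigma>\<close> \<open>distinct \<sigma>'\<close> by (simp_all add: distinct_zipI1)
    show "set (zip \<sigma> \<pi>) = set (zip \<sigma>' \<pi>')"
      using set_zip_eq_graph[OF \<sigma>(1) len(1)] set_zip_eq_graph[OF \<sigma>(2) len(2)] tau by simp
    show "sorted (map (wip_key (hatted \<sigma> \<pi>)) (zip \<sigma> \<pi>))" by (rule sorted_wip_key[OF w])
    show "sorted (map (wip_key (hatted \<sigma> \<pi>)) (zip \<sigma>' \<pi>'))" unfolding hat
      by (rule sorted_wip_key[OF w'])
  qed
  then show ?thesis using len by (metis map_fst_zip map_snd_zip)
qed

lemma strict_sorted_successor:
  assumes sorted: "sorted_wrt (<) (map g xs)" and "a \<in> set xs" "b \<in> set xs"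
    and succ: "g b = Suc (g a)"
  shows "\<exists>l. Suc l < length xs \<and> xs ! l = a \<and> xs ! Suc l = b"
proof -
  obtain la lb where la: "la < length xs" "xs ! la = a" and lb: "lb < length xs" "xs ! lb = b"
    using assms(2,3) by (auto simp: in_set_conv_nth)
  have less: "g (xs ! l) < g (xs ! l')" if "l < l'" "l' < length xs" for l l'
    using sorted that by (simp add: sorted_wrt_iff_nth_less)
  have "la < lb" using less[of lb la] la lb succ by (cases la lb rule: linorder_cases) auto
  moreover have "\<not> Suc la < lb" using less[of la "Suc la"] less[of "Suc la" lb] la lb succ by auto
  ultimately have "lb = Suc la" by simp
  then show ?thesis using la lb by blast
qed

definition sorted_graph :: "nat \<Rightarrow> (nat \<Rightarrow> nat) \<Rightarrow> (nat \<Rightarrow> bool) \<Rightarrow> (nat \<times> nat) list" where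
  "sorted_graph n f H = sort_key (wip_key H) (map (\<lambda>k. (k, f k)) [1..<n+1])"

definition wip_of :: "nat \<Rightarrow> (nat \<Rightarrow> nat) \<Rightarrow> (nat \<Rightarrow> bool) \<Rightarrow> nat list \<times> nat list" where
  "wip_of n f H = (map fst (sorted_graph n f H), map snd (sorted_graph n f H))"

lemma sorted_graph:
  assumes f: "f permutes {1..n}"
  shows "set (sorted_graph n f H) = (\<lambda>k. (k, f k)) ` {1..n}" "length (sorted_graph n f H) = n"
    "sorted_wrt (<) (map (wip_key H) (sorted_graph n f H))"
proof -
  have "distinct (sorted_graph n f H)"
    unfolding sorted_graph_def by (simp add: distinct_map inj_on_def)
  moreover show set: "set (sorted_graph n f H) = (\<lambda>k. (k, f k)) ` {1..n}"
    unfolding sorted_graph_def by auto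
  ultimately have "distinct (map (wip_key H) (sorted_graph n f H))"
    using inj_on_wip_key[OF f] by (simp add: distinct_map)
  then show "sorted_wrt (<) (map (wip_key H) (sorted_graph n f H))"
    by (simp add: strict_sorted_iff sorted_graph_def)
  show "length (sorted_graph n f H) = n" unfolding sorted_graph_def by simp
qed

lemma wip_of_in_WIP:
  assumes f: "f permutes {1..n}"
  shows "wip_of n f H \<in> WIP n"
proof -
  let ?L = "sorted_graph n f H"
  note L = sorted_graph[OF f, of H]
  have "inj_on fst (set ?L)" "inj_on snd (set ?L)"
    unfolding L(1) using permutes_inj[OF f] by (auto simp: inj_on_def dest: injD)
  moreover have "distinct ?L" using L(3) strict_sorted_iff distinct_map by blast
  moreover have "fst ` set ?L = {1..n}" "snd ` set ?L = {1..n}"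
    unfolding L(1) using permutes_image[OF f] by (simp_all add: image_image)
  ultimately have "perm_list n (map fst ?L)" "perm_list n (map snd ?L)"
    unfolding perm_list_def using L(2) by (simp_all add: distinct_map)
  moreover have "max (fst (?L ! i)) (snd (?L ! i)) \<le> max (fst (?L ! (i+1))) (snd (?L ! (i+1)))"
    if "i + 1 < n" for i
    using L(2,3) that
    by (intro max_le_if_wip_key_le[of H] less_imp_le) (simp add: sorted_wrt_iff_nth_less)
  ultimately show ?thesis unfolding wip_of_def WIP_def using L(2) by simp
qed

lemma tau_of_wip_of:
  assumes f: "f permutes {1..n}" and w: "wip_of n f H = (\<sigma>, \<pi>)"
  shows "tau_of \<sigma> \<pi> = f"
proof -
  note L = sorted_graph[OF f, of H]
  have \<sigma>: "perm_list n \<sigma>" and \<pi>: "length \<pi> = n"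
    using wip_of_in_WIP[OF f, of H] w unfolding WIP_def perm_list_def by auto
  have "zip \<sigma> \<pi> = sorted_graph n f H" using w unfolding wip_of_def by (auto simp: zip_map_fst_snd)
  then have graph: "(\<lambda>k. (k, tau_of \<sigma> \<pi> k)) ` {1..n} = (\<lambda>k. (k, f k)) ` {1..n}"
    using set_zip_eq_graph[OF \<sigma> \<pi>] L(1) by simp
  show ?thesis
  proof
    fix x show "tau_of \<sigma> \<pi> x = f x"
    proof (cases "x \<in> {1..n}")
      case True
      then have "(x, tau_of \<sigma> \<pi> x) \<in> (\<lambda>k. (k, f k)) ` {1..n}" using graph by blast
      then show ?thesis by auto
    next
      case False
      then show ?thesis
        using permutes_not_in[OF f] \<sigma> unfolding tau_of_def perm_list_def by auto
    qed
  qed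
qed

lemma hatted_wip_of:
  assumes f: "f permutes {1..n}" and w: "wip_of n f H = (\<sigma>, \<pi>)" and peak: "cycle_peak n f k"
  shows "hatted \<sigma> \<pi> k \<longleftrightarrow> H k"
proof -
  let ?L = "sorted_graph n f H"
  note L = sorted_graph[OF f, of H]
  have \<sigma>: "\<sigma> = map fst ?L" and \<pi>: "\<pi> = map snd ?L" using w unfolding wip_of_def by auto
  have k: "k \<in> {1..n}" using peak unfolding cycle_peak_def by simp
  define j where "j = inv_into {1..n} f k"
  have "k \<in> f ` {1..n}" using permutes_image[OF f] k by simp
  then have j: "j \<in> {1..n}" "f j = k" unfolding j_def by (rule inv_into_into, rule f_inv_into_f)
  have "j < k" "f k < k" using peak unfolding cycle_peak_def j_def by auto
  have in_L: "(k, f k) \<in> set ?L" "(j, k) \<in> set ?L" using L(1) k j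
    by (auto intro!: image_eqI[of _ _ j])
  have key_k: "wip_key H (k, f k) = 2 * k + (if H k then 0 else 1)"
    using wip_key_fst_max[where H=H and p="(k, f k)"] \<open>f k < k\<close> by simp
  have key_j: "wip_key H (j, k) = 2 * k + (if H k then 1 else 0)"
    using wip_key_snd_max[where H=H and p="(j, k)"] \<open>j < k\<close> by simp
  have "(\<exists>l. l + 1 < n \<and> \<sigma> ! l = k \<and> \<pi> ! (l+1) = k) \<longleftrightarrow> H k"
  proof
    assume "\<exists>l. l + 1 < n \<and> \<sigma> ! l = k \<and> \<pi> ! (l+1) = k"
    then obtain l where l: "l + 1 < n" "fst (?L ! l) = k" "snd (?L ! (l+1)) = k"
      using L(2) \<sigma> \<pi> by auto
    have "?L ! l \<in> set ?L" "?L ! (l+1) \<in> set ?L" using l(1) L(2) by auto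
    then have "?L ! l = (k, f k)" "?L ! (l+1) = (j, k)"
      using l L(1) j permutes_inj[OF f] by (auto dest: injD)
    moreover have "wip_key H (?L ! l) < wip_key H (?L ! (l+1))"
      using L(2,3) l(1) by (simp add: sorted_wrt_iff_nth_less)
    ultimately show "H k" using key_k key_j by (auto split: if_splits)
  next
    assume "H k"
    then have "wip_key H (j, k) = Suc (wip_key H (k, f k))" using key_k key_j by simp
    then obtain l where "Suc l < length ?L" "?L ! l = (k, f k)" "?L ! Suc l = (j, k)"
      using strict_sorted_successor[OF L(3) in_L] by blast
    then show "\<exists>l. l + 1 < n \<and> \<sigma> ! l = k \<and> \<pi> ! (l+1) = k" using L(2) \<sigma> \<pi> by auto
  qed
  moreover have "length \<sigma> = n" using \<sigma> L(2) by simp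
  ultimately show ?thesis using peak tau_of_wip_of[OF f w] unfolding hatted_def by simp
qed


section \<open>The bijection\<close>

lemma hatted_imp_cycle_peak: "hatted \<sigma> \<pi> k \<Longrightarrow> cycle_peak (length \<sigma>) (tau_of \<sigma> \<pi>) k"
  unfolding hatted_def by simp

lemma Phi_eq_signed_word:
  assumes "(\<sigma>, \<pi>) \<in> WIP n"
  shows "Phi \<sigma> \<pi> = signed_word (foata n (tau_of \<sigma> \<pi>)) (hatted \<sigma> \<pi>)"
proof -
  have "length \<sigma> = n" "length (foata n (tau_of \<sigma> \<pi>)) = n"
    using assms perm_list_foata[OF tau_of_permutes] unfolding WIP_def perm_list_def by auto
  then show ?thesis
    unfolding Phi_def signed_word_def signed_letter_def assoc_peak_def Let_def by simp
qed

lemma Phi_in_snakes: "(\<sigma>, \<pi>) \<in> WIP n \<Longrightarrow> Phi \<sigma> \<pi> \<in> snakes n"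
  unfolding Phi_eq_signed_word
  by (rule signed_word_in_snakes, rule perm_list_foata, rule tau_of_permutes)
    (auto simp: WIP_def)

lemma inj_on_Phi: "inj_on (\<lambda>(\<sigma>, \<pi>). Phi \<sigma> \<pi>) (WIP n)"
proof (rule inj_onI, clarify)
  fix \<sigma> \<pi> \<sigma>' \<pi>' assume w: "(\<sigma>, \<pi>) \<in> WIP n" and w': "(\<sigma>', \<pi>') \<in> WIP n"
    and eq: "Phi \<sigma> \<pi> = Phi \<sigma>' \<pi>'"
  let ?\<tau> = "tau_of \<sigma> \<pi>" and ?\<tau>' = "tau_of \<sigma>' \<pi>'"
  have \<tau>: "?\<tau> permutes {1..n}" "?\<tau>' permutes {1..n}" using w w' tau_of_permutes unfolding WIP_def
    by auto
  let ?t = "foata n ?\<tau>"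
  have "?t = foata n ?\<tau>'"
    using eq abs_signed_word unfolding Phi_eq_signed_word[OF w] Phi_eq_signed_word[OF w'] by metis
  then have same_\<tau>: "?\<tau> = ?\<tau>'" using foata_inj[OF \<tau>] by simp
  have t: "perm_list n ?t" using perm_list_foata[OF \<tau>(1)] .
  have signs: "signed_word ?t (hatted \<sigma> \<pi>) = signed_word ?t (hatted \<sigma>' \<pi>')"
    using eq same_\<tau> unfolding Phi_eq_signed_word[OF w] Phi_eq_signed_word[OF w'] by simp
  have "hatted \<sigma> \<pi> k = hatted \<sigma>' \<pi>' k" for k
  proof (cases "cycle_peak n ?\<tau> k")
    case True
    \<comment> \<open>a cycle peak is a left peak of the Foata word, whose sign is recorded at its right valley\<close>
    then have "k \<in> set ?t" using t unfolding cycle_peak_def perm_list_def by simp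
    then obtain j where "j < length ?t" "k = ?t ! j" by (metis in_set_conv_nth)
    then have j: "j < n" "k = ?t ! j" using t unfolding perm_list_def by auto
    then have "left_peak ?t j" using left_peak_foata_iff[OF \<tau>(1) j(1)] True by simp
    then obtain i where i: "right_valley ?t i" "assoc_peak ?t i = j"
      using left_peak_has_right_valley t unfolding perm_list_def by blast
    moreover have "0 < ?t ! i" using perm_list_nth_pos[OF t] i unfolding right_valley_def by simp
    ultimately have "hatted \<sigma> \<pi> (?t ! j) = hatted \<sigma>' \<pi>' (?t ! j)"
      using signed_word_eqD[OF signs] by metis
    then show ?thesis using j by simp
  next
    case False
    have "length \<sigma> = n" "length \<sigma>' = n" using w w' unfolding WIP_def perm_list_def by auto
    then have "\<not> hatted \<sigma> \<pi> k" "\<not> hatted \<sigma>' \<pi>' k"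
      using False same_\<tau> hatted_imp_cycle_peak by metis+
    then show ?thesis by simp
  qed
  then show "\<sigma> = \<sigma>' \<and> \<pi> = \<pi>'" using WIP_eq_if_same_tau_hatted[OF w w' same_\<tau>] by auto
qed

lemma snakes_subset_Phi_image: "snakes n \<subseteq> (\<lambda>(\<sigma>, \<pi>). Phi \<sigma> \<pi>) ` WIP n"
proof
  fix q assume q: "q \<in> snakes n"
  define t where "t = map (\<lambda>p. nat \<bar>p\<bar>) q"
  obtain H where H: "q = signed_word t H" using snake_eq_signed_word[OF q] unfolding t_def by blast
  have t: "perm_list n t" using q unfolding t_def snakes_def by simp
  then have "t \<in> foata n ` {f. f permutes {1..n}}" using bij_betw_foata[of n]
    by (simp add: bij_betw_def)
  then obtain f where f: "f permutes {1..n}" "foata n f = t" by auto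
  obtain \<sigma> \<pi> where w: "wip_of n f H = (\<sigma>, \<pi>)" by (cases "wip_of n f H")
  have "Phi \<sigma> \<pi> = signed_word t (hatted \<sigma> \<pi>)"
    using Phi_eq_signed_word wip_of_in_WIP[OF f(1)] tau_of_wip_of[OF f(1)] w f(2) by metis
  also have "\<dots> = signed_word t H"
  proof (rule signed_word_cong)
    fix i assume i: "right_valley t i"
    have "distinct t" using t unfolding perm_list_def by simp
    then have "left_peak t (assoc_peak t i)" using assoc_peak i by blast
    moreover from this have "assoc_peak t i < n" using t unfolding left_peak_def perm_list_def
      by simp
    ultimately have "cycle_peak n f (t ! assoc_peak t i)" using left_peak_foata_iff[OF f(1)] f(2)
      by blast
    then show "hatted \<sigma> \<pi> (t ! assoc_peak t i) = H (t ! assoc_peak t i)"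
      by (rule hatted_wip_of[OF f(1) w])
  qed
  finally show "q \<in> (\<lambda>(\<sigma>, \<pi>). Phi \<sigma> \<pi>) ` WIP n"
    using H wip_of_in_WIP[OF f(1), of H] w by force
qed

theorem theorem2p1:
  fixes n :: nat
  assumes "1 \<le> n"
  shows "(\<forall>(\<sigma>, \<pi>) \<in> WIP n. Phi \<sigma> \<pi> \<in> snakes n)
         \<and> bij_betw (\<lambda>(\<sigma>, \<pi>). Phi \<sigma> \<pi>) (WIP n) (snakes n)"
proof -
  have "\<forall>(\<sigma>, \<pi>) \<in> WIP n. Phi \<sigma> \<pi> \<in> snakes n" using Phi_in_snakes by blast
  moreover from this have "(\<lambda>(\<sigma>, \<pi>). Phi \<sigma> \<pi>) ` WIP n = snakes n"
    using snakes_subset_Phi_image[of n] by fast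
  ultimately show ?thesis using inj_on_Phi unfolding bij_betw_def by blast
qed

end
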